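(* Let $p$ be a prime and $R=\mathbb{F}_p[x,x^{-1}]$. For any integers $n>0$, $b>0$ and $0<r\le nb$ there is an additive subgroup $U\subset R^n$ such that $e(U)=b$ and ${\rm rk}_b(U)=r$.
   Context: For an additive subgroup $U$ of an $R$-module, $e(U)$ is the minimal positive integer $e$ with $x^eU=U$ (and $+\infty$ if none). If $x^bU=U$, ${\rm rk}_b(U)$ is the rank of $U$ regarded as an $R$-module via $x\ast u=x^bu$, where the rank of a finitely generated $R$-module is the maximal number of elements freely generating a free submodule ($0$ if none). *)

theory Defs
  imports Main "HOL-Library.Extended_Nat" "HOL-Library.Function_Algebras" "HOL-Computational_Algebra.Primes"
begin

text \<open>
  Model: R = F[x,x^-1] with F a field (of cardinality p in the theorem).
  A Laurent polynomial is a finitely supported function int => F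
  (coefficient of x^k).  An element of R^n is a function
  v :: nat => int => F with v i = 0 for i >= n and finite support;
  v i is the i-th coordinate.
\<close>

definition laurent_vecs :: "nat \<Rightarrow> (nat \<Rightarrow> int \<Rightarrow> 'a::zero) set" where
  "laurent_vecs n = {v. (\<forall>i k. n \<le> i \<longrightarrow> v i k = 0) \<and> finite {(i,k). v i k \<noteq> 0}}"

definition xpow :: "int \<Rightarrow> (nat \<Rightarrow> int \<Rightarrow> 'a) \<Rightarrow> (nat \<Rightarrow> int \<Rightarrow> 'a)" where
  "xpow e v = (\<lambda>i k. v i (k - e))"

definition add_subgroup :: "nat \<Rightarrow> (nat \<Rightarrow> int \<Rightarrow> 'a::ab_group_add) set \<Rightarrow> bool" where
  "add_subgroup n U \<longleftrightarrow> U \<subseteq> laurent_vecs n \<and> 0 \<in> U \<and>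
     (\<forall>u\<in>U. \<forall>v\<in>U. u + v \<in> U) \<and> (\<forall>u\<in>U. - u \<in> U)"

definition e_inv :: "(nat \<Rightarrow> int \<Rightarrow> 'a) set \<Rightarrow> enat" where
  "e_inv U = (if \<exists>e::nat. 0 < e \<and> xpow (int e) ` U = U
              then enat (LEAST e::nat. 0 < e \<and> xpow (int e) ` U = U) else \<infinity>)"

text \<open>Twisted scalar action: Laurent polynomial c acts on u with x acting as x^b.\<close>
definition smul_b :: "nat \<Rightarrow> (int \<Rightarrow> 'a::comm_ring_1) \<Rightarrow> (nat \<Rightarrow> int \<Rightarrow> 'a) \<Rightarrow> (nat \<Rightarrow> int \<Rightarrow> 'a)" where
  "smul_b b c u = (\<lambda>i k. \<Sum>m\<in>{m. c m \<noteq> 0}. c m * xpow (int b * m) u i k)"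

definition indep_b :: "nat \<Rightarrow> (nat \<Rightarrow> nat \<Rightarrow> int \<Rightarrow> 'a::comm_ring_1) \<Rightarrow> nat \<Rightarrow> bool" where
  "indep_b b us k \<longleftrightarrow>
     (\<forall>cs :: nat \<Rightarrow> int \<Rightarrow> 'a. (\<forall>j<k. finite {m. cs j m \<noteq> 0}) \<and>
         (\<Sum>j<k. smul_b b (cs j) (us j)) = 0 \<longrightarrow> (\<forall>j<k. cs j = 0))"

definition rk_b :: "nat \<Rightarrow> (nat \<Rightarrow> int \<Rightarrow> 'a::comm_ring_1) set \<Rightarrow> nat" where
  "rk_b b U = (GREATEST k. \<exists>us. (\<forall>j<k. us j \<in> U) \<and> indep_b b us k)"

end

theory Submission
  imports Defs "HOL-Library.FuncSet"
begin

text \<open>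
  For the action of R in which x acts as x^b, R^n is free with basis the monomial vectors
  x^k e_i, 0 \<le> k < b; number them by the slot i b + k.  Take for U the vectors supported on
  the first r slots whose augmentation, the coefficient sum of the x^b-part of the first
  coordinate, vanishes.  Then U is free of rank r, with basis e_0 - x^b e_0 together with the
  monomials of slots 1, ..., r - 1, while any r + 1 vectors supported on the first r slots are
  dependent: over a finite field a pigeonhole count on windows of coefficients produces a
  relation.  U is stable under x^b, and for 0 < e < b it is not stable under x^e: if e < r,
  then x^e e_0 lies in U but e_0 does not; if e \<ge> r, then x^e (e_0 - x^b e_0) reaches slot e.
\<close>

lemma sum_fun_apply: "(sum f A) x = (\<Sum>a\<in>A. f a x)"
  by (induction A rule: infinite_finite_induct) auto

lemma laurent_vecs_row_finite:
  assumes "v \<in> laurent_vecs n" shows "finite {k. v i k \<noteq> 0}"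
proof -
  have "{k. v i k \<noteq> 0} \<subseteq> snd ` {(i,k). v i k \<noteq> 0}" by force
  thus ?thesis using assms unfolding laurent_vecs_def by (auto intro: finite_subset)
qed

lemma laurent_vecs_add:
  fixes u v :: "nat \<Rightarrow> int \<Rightarrow> 'a::monoid_add"
  assumes "u \<in> laurent_vecs n" "v \<in> laurent_vecs n"
  shows "u + v \<in> laurent_vecs n"
proof -
  have "{(i,k). (u + v) i k \<noteq> 0} \<subseteq> {(i,k). u i k \<noteq> 0} \<union> {(i,k). v i k \<noteq> 0}" by auto
  with assms show ?thesis unfolding laurent_vecs_def by (auto intro: finite_subset)
qed

lemma laurent_vecs_uminus:
  "(u :: nat \<Rightarrow> int \<Rightarrow> 'a::group_add) \<in> laurent_vecs n \<Longrightarrow> - u \<in> laurent_vecs n"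
  unfolding laurent_vecs_def by (simp add: case_prod_unfold)

lemma laurent_vecs_xpow: "v \<in> laurent_vecs n \<Longrightarrow> xpow s v \<in> laurent_vecs n"
proof -
  assume v: "v \<in> laurent_vecs n"
  have "{(i,k). xpow s v i k \<noteq> 0} = (\<lambda>(i,k). (i, k + s)) ` {(i,k). v i k \<noteq> 0}"
    unfolding xpow_def by (force simp: image_iff)
  with v show ?thesis unfolding laurent_vecs_def xpow_def by auto
qed

lemma laurent_vecs_exponent_bound:
  fixes K :: nat
  assumes "\<forall>j<K. us j \<in> laurent_vecs n"
  obtains A :: nat where "\<And>j i k. j < K \<Longrightarrow> us j i k \<noteq> 0 \<Longrightarrow> \<bar>k\<bar> \<le> int A"
proof -
  let ?S = "\<Union>j<K. {(i,k). us j i k \<noteq> 0}"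
  let ?A = "Max (insert 0 ((\<lambda>(i,k). nat \<bar>k\<bar>) ` ?S))"
  have "finite ?S" using assms unfolding laurent_vecs_def by (intro finite_UN_I) auto
  hence "\<forall>(i,k)\<in>?S. nat \<bar>k\<bar> \<le> ?A" by (auto intro!: Max_ge)
  hence "\<forall>(i,k)\<in>?S. \<bar>k\<bar> \<le> int ?A" by (auto simp: nat_le_iff)
  thus thesis by (intro that[of ?A]) blast
qed

lemma xpow_xpow: "xpow s (xpow t v) = xpow (s + t) v"
  unfolding xpow_def by (simp add: algebra_simps)

lemma xpow_0: "xpow 0 v = v"
  unfolding xpow_def by simp

lemma smul_b_eq_sum_over:
  assumes "finite M" "{m. c m \<noteq> 0} \<subseteq> M"
  shows "smul_b b c u i k = (\<Sum>m\<in>M. c m * u i (k - int b * m))"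
  unfolding smul_b_def xpow_def using assms by (intro sum.mono_neutral_left) auto

lemma smul_b_diff:
  "smul_b b c (u - v) = smul_b b c u - smul_b b c (v :: nat \<Rightarrow> int \<Rightarrow> 'a::comm_ring_1)"
  unfolding smul_b_def xpow_def by (auto simp: sum_subtractf right_diff_distrib intro!: ext)

definition unit_vec :: "nat \<Rightarrow> int \<Rightarrow> nat \<Rightarrow> int \<Rightarrow> 'a::zero_neq_one" where
  "unit_vec i0 k0 = (\<lambda>i k. if i = i0 \<and> k = k0 then 1 else 0)"

lemma unit_vec_laurent_vecs:
  "i0 < n \<Longrightarrow> (unit_vec i0 k0 :: nat \<Rightarrow> int \<Rightarrow> 'a::zero_neq_one) \<in> laurent_vecs n"
proof -
  assume "i0 < n"
  moreover have "{(i,k). (unit_vec i0 k0 :: nat \<Rightarrow> int \<Rightarrow> 'a) i k \<noteq> 0} = {(i0,k0)}"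
    by (auto simp: unit_vec_def)
  ultimately show ?thesis unfolding laurent_vecs_def by (auto simp: unit_vec_def)
qed

lemma smul_b_unit_vec:
  assumes "0 < b" "finite {m. c m \<noteq> 0}"
  shows "smul_b b c (unit_vec i0 k0) i k =
    (if i = i0 \<and> int b dvd (k - k0) then c ((k - k0) div int b) else (0::'a::comm_ring_1))"
proof -
  have unfold: "smul_b b c (unit_vec i0 k0) i k =
      (\<Sum>m\<in>{m. c m \<noteq> 0}. c m * (if i = i0 \<and> k - int b * m = k0 then 1 else 0))"
    unfolding smul_b_def xpow_def unit_vec_def by simp
  show ?thesis
  proof (cases "i = i0 \<and> int b dvd (k - k0)")
    case True
    define m0 where "m0 = (k - k0) div int b"
    have "\<And>m. (k - int b * m = k0) = (m = m0)"
      using True assms(1) unfolding m0_def by (auto elim!: dvdE)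
    hence "smul_b b c (unit_vec i0 k0) i k = (\<Sum>m\<in>{m. c m \<noteq> 0}. if m = m0 then c m else 0)"
      using unfold True by (auto intro!: sum.cong)
    also have "\<dots> = c m0" using assms(2) by (auto simp: sum.delta)
    finally show ?thesis using True m0_def by simp
  next
    case False
    hence "\<And>m. \<not> (i = i0 \<and> k - int b * m = k0)" by (auto simp: algebra_simps)
    hence "smul_b b c (unit_vec i0 k0) i k = 0" using unfold by (auto intro!: sum.neutral)
    thus ?thesis by (simp only: if_not_P[OF False])
  qed
qed

text \<open>
  Since x^k e_i = (x^b)^(k div b) x^(k mod b) e_i, under the twisted action the coefficient of
  x^k e_i belongs to the basis vector x^(k mod b) e_i, numbered i b + k mod b.
\<close>

definition slot :: "nat \<Rightarrow> nat \<Rightarrow> int \<Rightarrow> nat" where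
  "slot b i k = i * b + nat (k mod int b)"

lemma slot_diff_dvd:
  assumes "int b dvd s" shows "slot b i (k - s) = slot b i k"
proof -
  have "(k - s) mod int b = k mod int b" using assms by (simp add: mod_eq_dvd_iff)
  thus ?thesis unfolding slot_def by simp
qed

lemma slot_of_div_mod: "slot b (j div b) (int (j mod b) + int b * m) = j"
  unfolding slot_def by (simp add: nat_int flip: of_nat_mod)

lemma slot_div_inj:
  assumes "0 < b" "slot b i k = slot b i' k'" "k div int b = k' div int b"
  shows "i = i' \<and> k = k'"
proof -
  have "nat (k mod int b) < b" "nat (k' mod int b) < b"
    using assms(1) by (simp_all add: nat_less_iff)
  hence "(i * b + nat (k mod int b)) div b = i" "(i' * b + nat (k' mod int b)) div b = i'"
    using assms(1) by simp_all
  hence i: "i = i'" using assms(2) unfolding slot_def by metis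
  hence "nat (k mod int b) = nat (k' mod int b)" using assms(2) unfolding slot_def by simp
  hence "k mod int b = k' mod int b" using assms(1) by (simp add: eq_nat_nat_iff)
  hence "k = k'" using assms(3) by (metis div_mult_mod_eq)
  with i show ?thesis by simp
qed

lemma div_bounds:
  assumes "0 < b" "- int A \<le> k" "k \<le> int A + int b * int D"
  shows "- int A \<le> k div int b \<and> k div int b \<le> int A + int D"
proof
  have "- int A * int b \<le> - int A" using assms(1) by (simp add: mult_le_cancel_left1)
  hence "- int A * int b \<le> k" using assms(2) by linarith
  hence "(- int A * int b) div int b \<le> k div int b" using assms(1) by (intro zdiv_mono1) auto
  moreover have "(- int A * int b) div int b = - int A"
    by (rule nonzero_mult_div_cancel_right) (use assms(1) in simp)
  ultimately show "- int A \<le> k div int b" by simp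
next
  have "k div int b \<le> (int A + int b * int D) div int b" using assms(1,3) by (intro zdiv_mono1) auto
  also have "\<dots> = int A div int b + int D" using assms(1) by simp
  also have "\<dots> \<le> int A + int D" unfolding zdiv_int[symmetric] by simp
  finally show "k div int b \<le> int A + int D" .
qed

lemma slot_window:
  fixes b r A D :: nat
  assumes "0 < b"
  defines "T \<equiv> {(i,k). slot b i k < r \<and> - int A \<le> k \<and> k \<le> int A + int b * int D}"
  shows "finite T" and "card T \<le> r * (2 * A + D + 1)"
proof -
  let ?g = "\<lambda>(i,k). (slot b i k, k div int b)"
  have into: "?g ` T \<subseteq> {..<r} \<times> {- int A .. int A + int D}"
    using div_bounds[OF assms(1)] unfolding T_def by auto
  have inj: "inj_on ?g T"
    using slot_div_inj[OF assms(1)] by (auto intro!: inj_onI)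
  show "finite T" by (rule inj_on_finite[OF inj into]) simp
  have "card T \<le> card ({..<r} \<times> {- int A .. int A + int D})"
    by (rule card_inj_on_le[OF inj into]) simp
  also have "\<dots> = r * (2 * A + D + 1)"
    by (simp add: card_cartesian_product nat_add_distrib nat_mult_distrib)
  finally show "card T \<le> r * (2 * A + D + 1)" .
qed

definition low_slot_vecs :: "nat \<Rightarrow> nat \<Rightarrow> nat \<Rightarrow> (nat \<Rightarrow> int \<Rightarrow> 'a::zero) set" where
  "low_slot_vecs n b r = {v \<in> laurent_vecs n. \<forall>i k. r \<le> slot b i k \<longrightarrow> v i k = 0}"

definition augmentation :: "nat \<Rightarrow> (nat \<Rightarrow> int \<Rightarrow> 'a::comm_monoid_add) \<Rightarrow> 'a" where
  "augmentation b v = (\<Sum>k\<in>{k. int b dvd k \<and> v 0 k \<noteq> 0}. v 0 k)"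

definition aug_kernel :: "nat \<Rightarrow> nat \<Rightarrow> nat \<Rightarrow> (nat \<Rightarrow> int \<Rightarrow> 'a::ab_group_add) set" where
  "aug_kernel n b r = {v \<in> low_slot_vecs n b r. augmentation b v = 0}"

lemma augmentation_eq_sum_over:
  assumes "finite M" "{k. v 0 k \<noteq> 0} \<subseteq> M"
  shows "augmentation b v = (\<Sum>k\<in>{k\<in>M. int b dvd k}. v 0 k)"
  unfolding augmentation_def using assms by (intro sum.mono_neutral_left) auto

lemma augmentation_add:
  assumes "u \<in> laurent_vecs n" "v \<in> laurent_vecs n"
  shows "augmentation b (u + v) = augmentation b u + (augmentation b v :: 'a::ab_group_add)"
proof -
  let ?M = "{k. u 0 k \<noteq> 0} \<union> {k. v 0 k \<noteq> 0}"
  have M: "finite ?M" using laurent_vecs_row_finite assms by blast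
  have "augmentation b (u + v) = (\<Sum>k\<in>{k\<in>?M. int b dvd k}. (u + v) 0 k)"
    by (rule augmentation_eq_sum_over[OF M]) auto
  also have "\<dots> = (\<Sum>k\<in>{k\<in>?M. int b dvd k}. u 0 k) + (\<Sum>k\<in>{k\<in>?M. int b dvd k}. v 0 k)"
    by (simp add: sum.distrib)
  also have "\<dots> = augmentation b u + augmentation b v"
    using augmentation_eq_sum_over[OF M, of u b] augmentation_eq_sum_over[OF M, of v b] by auto
  finally show ?thesis .
qed

lemma augmentation_uminus: "augmentation b (- u) = - (augmentation b u :: 'a::ab_group_add)"
  unfolding augmentation_def by (simp add: sum_negf)

lemma augmentation_xpow:
  assumes "int b dvd s" shows "augmentation b (xpow s v) = augmentation b v"
  unfolding augmentation_def xpow_def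
proof (rule sum.reindex_bij_witness[of _ "\<lambda>k. k + s" "\<lambda>k. k - s"])
  fix a assume "a \<in> {k. int b dvd k \<and> v 0 (k - s) \<noteq> 0}"
  thus "a - s + s = a" "a - s \<in> {k. int b dvd k \<and> v 0 k \<noteq> 0}" "v 0 (a - s) = v 0 (a - s)"
    using assms by auto
next
  fix a assume "a \<in> {k. int b dvd k \<and> v 0 k \<noteq> 0}"
  thus "a + s - s = a" "a + s \<in> {k. int b dvd k \<and> v 0 (k - s) \<noteq> 0}"
    using assms by auto
qed

lemma augmentation_unit_vec:
  "augmentation b (unit_vec i0 k0 :: nat \<Rightarrow> int \<Rightarrow> 'a::{zero_neq_one,comm_monoid_add}) =
    (if i0 = 0 \<and> int b dvd k0 then 1 else 0)"
proof -
  have "augmentation b (unit_vec i0 k0 :: nat \<Rightarrow> int \<Rightarrow> 'a) =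
      (\<Sum>k\<in>{k\<in>{k0}. int b dvd k}. unit_vec i0 k0 0 k)"
    by (rule augmentation_eq_sum_over) (auto simp: unit_vec_def split: if_splits)
  moreover have "{k\<in>{k0}. int b dvd k} = (if int b dvd k0 then {k0} else {})" by auto
  ultimately show ?thesis by (auto simp: unit_vec_def)
qed

lemma add_subgroup_aug_kernel: "add_subgroup n (aug_kernel n b r)"
  unfolding add_subgroup_def aug_kernel_def low_slot_vecs_def
proof (intro conjI)
  show "0 \<in> {v \<in> {v \<in> laurent_vecs n. \<forall>i k. r \<le> slot b i k \<longrightarrow> v i k = 0}. augmentation b v = 0}"
    by (auto simp: laurent_vecs_def augmentation_def)
qed (auto simp: laurent_vecs_add laurent_vecs_uminus augmentation_add augmentation_uminus)

lemma aug_kernel_xpow: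
  assumes "int b dvd s" "v \<in> aug_kernel n b r"
  shows "xpow s v \<in> aug_kernel n b r"
proof -
  have "xpow s v i k = 0" if "r \<le> slot b i k" for i k
    using assms(2) that slot_diff_dvd[OF assms(1)]
    unfolding aug_kernel_def low_slot_vecs_def xpow_def by auto
  thus ?thesis using assms laurent_vecs_xpow augmentation_xpow[OF assms(1), of v]
    unfolding aug_kernel_def low_slot_vecs_def by auto
qed

lemma xpow_image_aug_kernel:
  "xpow (int b) ` (aug_kernel n b r :: (nat \<Rightarrow> int \<Rightarrow> 'a::ab_group_add) set) = aug_kernel n b r"
proof
  show "xpow (int b) ` aug_kernel n b r \<subseteq> (aug_kernel n b r :: (nat \<Rightarrow> int \<Rightarrow> 'a) set)"
    using aug_kernel_xpow[of b "int b"] by auto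
  show "(aug_kernel n b r :: (nat \<Rightarrow> int \<Rightarrow> 'a) set) \<subseteq> xpow (int b) ` aug_kernel n b r"
  proof
    fix v :: "nat \<Rightarrow> int \<Rightarrow> 'a" assume "v \<in> aug_kernel n b r"
    hence "xpow (- int b) v \<in> aug_kernel n b r" by (intro aug_kernel_xpow) auto
    moreover have "v = xpow (int b) (xpow (- int b) v)" by (simp add: xpow_xpow xpow_0)
    ultimately show "v \<in> xpow (int b) ` aug_kernel n b r" by blast
  qed
qed

definition basis_vec :: "nat \<Rightarrow> nat \<Rightarrow> nat \<Rightarrow> int \<Rightarrow> 'a::{zero_neq_one,ab_group_add}" where
  "basis_vec b j =
    (if j = 0 then unit_vec 0 0 - unit_vec 0 (int b) else unit_vec (j div b) (int (j mod b)))"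

lemma basis_vec_aug_kernel:
  assumes "0 < b" "j < r" "r \<le> n * b"
  shows "(basis_vec b j :: nat \<Rightarrow> int \<Rightarrow> 'a::{zero_neq_one,ab_group_add}) \<in> aug_kernel n b r"
proof (cases "j = 0")
  case True
  have "0 < n" using assms by (cases n) auto
  hence e0: "(unit_vec 0 0 :: nat \<Rightarrow> int \<Rightarrow> 'a) \<in> laurent_vecs n"
    and eb: "- (unit_vec 0 (int b) :: nat \<Rightarrow> int \<Rightarrow> 'a) \<in> laurent_vecs n"
    by (simp_all add: unit_vec_laurent_vecs laurent_vecs_uminus)
  have "augmentation b (unit_vec 0 0 - unit_vec 0 (int b) :: nat \<Rightarrow> int \<Rightarrow> 'a) = 0"
    unfolding diff_conv_add_uminus augmentation_add[OF e0 eb] augmentation_uminus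
    by (simp add: augmentation_unit_vec)
  moreover have "(unit_vec 0 0 - unit_vec 0 (int b) :: nat \<Rightarrow> int \<Rightarrow> 'a) i k = 0"
    if "r \<le> slot b i k" for i k
    using assms True that by (auto simp: unit_vec_def slot_def)
  ultimately show ?thesis
    using True laurent_vecs_add[OF e0 eb]
    unfolding diff_conv_add_uminus basis_vec_def aug_kernel_def low_slot_vecs_def by auto
next
  case False
  have "j div b < n" using assms by (intro less_mult_imp_div_less) simp
  moreover have "augmentation b (unit_vec (j div b) (int (j mod b)) :: nat \<Rightarrow> int \<Rightarrow> 'a) = 0"
  proof -
    have "\<not> (j div b = 0 \<and> b dvd j mod b)"
      using False assms(1) by (metis dvd_imp_mod_0 mod_mod_trivial div_mult_mod_eq add_0 mult_0)
    thus ?thesis by (simp add: augmentation_unit_vec)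
  qed
  moreover have "(unit_vec (j div b) (int (j mod b)) :: nat \<Rightarrow> int \<Rightarrow> 'a) i k = 0"
    if "r \<le> slot b i k" for i k
    using slot_of_div_mod[of b j 0] assms(2) that by (auto simp: unit_vec_def)
  ultimately show ?thesis
    using False unit_vec_laurent_vecs[of "j div b" n "int (j mod b)"]
    unfolding basis_vec_def aug_kernel_def low_slot_vecs_def by auto
qed

lemma smul_b_basis_vec_nonzero:
  assumes "0 < b" "finite {m. c m \<noteq> 0}"
    and "smul_b b c (basis_vec b j) i k \<noteq> (0::'a::comm_ring_1)"
  shows "slot b i k = j"
proof (cases "j = 0")
  case True
  hence "smul_b b c (unit_vec 0 0) i k - smul_b b c (unit_vec 0 (int b)) i k \<noteq> (0::'a)"
    using assms(3) by (simp add: basis_vec_def smul_b_diff)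
  hence "i = 0 \<and> (int b dvd k \<or> int b dvd (k - int b))"
    using smul_b_unit_vec[OF assms(1,2)] by (auto split: if_splits)
  hence "i = 0 \<and> k mod int b = 0"
    by (auto simp: dvd_eq_mod_eq_0 mod_diff_right_eq[symmetric])
  thus ?thesis using True by (simp add: slot_def)
next
  case False
  hence "i = j div b \<and> int b dvd (k - int (j mod b))"
    using assms(3) smul_b_unit_vec[OF assms(1,2)] by (auto simp: basis_vec_def split: if_splits)
  hence "i = j div b \<and> k mod int b = int (j mod b)"
    using assms(1) by (auto simp: mod_eq_dvd_iff[symmetric] zmod_int)
  thus ?thesis unfolding slot_def by (simp add: nat_int)
qed

lemma finite_support_periodic_eq_0:
  assumes "finite {m::int. c m \<noteq> 0}" "\<And>m. c m = c (m - 1)"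
  shows "c = 0"
proof -
  have const: "c m = c 0" for m
  proof (induction m rule: int_induct[where k=0])
    case (step1 i) thus ?case using assms(2)[of "i + 1"] by simp
  next
    case (step2 i) thus ?case using assms(2)[of i] by simp
  qed simp
  have "c 0 = 0"
  proof (rule ccontr)
    assume "c 0 \<noteq> 0"
    hence "{m. c m \<noteq> 0} = UNIV" using const by (metis (mono_tags) UNIV_eq_I mem_Collect_eq)
    thus False using assms(1) infinite_UNIV_int by metis
  qed
  thus ?thesis using const by auto
qed

text \<open>
  In a relation among the basis vectors, slot j of the sum only sees the j-th term; for j > 0
  this term is the j-th coefficient, for j = 0 it is the coefficient times 1 - x^b.
\<close>

lemma indep_b_basis_vec:
  assumes "0 < b" shows "indep_b b (basis_vec b :: nat \<Rightarrow> nat \<Rightarrow> int \<Rightarrow> 'a::comm_ring_1) r"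
  unfolding indep_b_def
proof (rule allI, rule impI, elim conjE)
  fix cs :: "nat \<Rightarrow> int \<Rightarrow> 'a"
  assume fin: "\<forall>j<r. finite {m. cs j m \<noteq> 0}"
    and rel: "(\<Sum>j<r. smul_b b (cs j) (basis_vec b j)) = 0"
  show "\<forall>j<r. cs j = 0"
  proof (intro allI impI)
    fix j assume j: "j < r"
    have slot_term: "smul_b b (cs j) (basis_vec b j) i k = 0" if "slot b i k = j" for i k
    proof -
      have "(\<Sum>j'<r. smul_b b (cs j') (basis_vec b j') i k) = 0"
        using fun_cong[OF fun_cong[OF rel, of i], of k] by (simp add: sum_fun_apply)
      moreover have "(\<Sum>j'\<in>{..<r} - {j}. smul_b b (cs j') (basis_vec b j') i k) = 0"
      proof (intro sum.neutral ballI)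
        fix j' assume "j' \<in> {..<r} - {j}"
        thus "smul_b b (cs j') (basis_vec b j') i k = 0"
          using smul_b_basis_vec_nonzero[OF assms, of "cs j'" j' i k] fin that by auto
      qed
      ultimately show ?thesis using j by (simp add: sum.remove)
    qed
    show "cs j = 0"
    proof (cases "j = 0")
      case False
      have "cs j m = 0" for m
        using slot_term[OF slot_of_div_mod[of b j m]] smul_b_unit_vec[OF assms, of "cs j"] fin j False assms
        by (simp add: basis_vec_def)
      thus ?thesis by auto
    next
      case True
      have "cs 0 m = cs 0 (m - 1)" for m
      proof -
        have "(int b * m - int b) div int b = m - 1"
          using assms by (simp flip: right_diff_distrib')
        hence "smul_b b (cs 0) (basis_vec b 0) 0 (int b * m) = cs 0 m - cs 0 (m - 1)"
          using smul_b_unit_vec[OF assms, of "cs 0"] fin j True assms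
          by (simp add: basis_vec_def smul_b_diff)
        moreover have "slot b 0 (int b * m) = 0" unfolding slot_def by simp
        ultimately show ?thesis using slot_term True by force
      qed
      thus ?thesis using finite_support_periodic_eq_0 fin j True by blast
    qed
  qed
qed

definition supported_funs :: "('i \<times> 'j) set \<Rightarrow> ('i \<Rightarrow> 'j \<Rightarrow> 'a::zero) set" where
  "supported_funs B = {f. \<forall>i j. f i j \<noteq> 0 \<longrightarrow> (i,j) \<in> B}"

lemma card_supported_funs:
  fixes B :: "('i \<times> 'j) set"
  assumes "finite B" "finite (UNIV :: 'a set)"
  shows "finite (supported_funs B :: ('i \<Rightarrow> 'j \<Rightarrow> 'a::zero) set)"
    and "card (supported_funs B :: ('i \<Rightarrow> 'j \<Rightarrow> 'a) set) = card (UNIV :: 'a set) ^ card B"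
proof -
  let ?F = "supported_funs B :: ('i \<Rightarrow> 'j \<Rightarrow> 'a) set"
  let ?P = "PiE B (\<lambda>_. UNIV :: 'a set)"
  define curry_on where "curry_on = (\<lambda>(g :: 'i \<times> 'j \<Rightarrow> 'a) i j. if (i,j) \<in> B then g (i,j) else 0)"
  define uncurry_on where "uncurry_on = (\<lambda>f :: 'i \<Rightarrow> 'j \<Rightarrow> 'a. restrict (\<lambda>x. f (fst x) (snd x)) B)"
  have bij: "bij_betw curry_on ?P ?F"
  proof (rule bij_betw_byWitness[where f' = uncurry_on])
    show "\<forall>g\<in>?P. uncurry_on (curry_on g) = g"
    proof
      fix g assume "g \<in> ?P"
      moreover have "uncurry_on (curry_on g) = restrict g B"
        unfolding uncurry_on_def curry_on_def by (auto simp: restrict_def)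
      ultimately show "uncurry_on (curry_on g) = g" by (simp add: PiE_restrict)
    qed
    show "\<forall>f\<in>?F. curry_on (uncurry_on f) = f"
      unfolding supported_funs_def curry_on_def uncurry_on_def by (fastforce intro!: ext)
    show "curry_on ` ?P \<subseteq> ?F" unfolding supported_funs_def curry_on_def by auto
    show "uncurry_on ` ?F \<subseteq> ?P" unfolding uncurry_on_def by auto
  qed
  have "finite ?P" using assms by (simp add: finite_PiE)
  thus "finite ?F" using bij bij_betw_finite by blast
  have "card ?F = card ?P" using bij by (simp add: bij_betw_same_card)
  thus "card ?F = card (UNIV :: 'a set) ^ card B" using assms(1) by (simp add: card_PiE)
qed

text \<open>
  Unlike smul_b, which sums over the support of the coefficient, this sums over a fixed window
  of twisted degrees and is therefore additive in the coefficients.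
\<close>

definition window_comb :: "nat \<Rightarrow> nat \<Rightarrow> nat \<Rightarrow> (nat \<Rightarrow> nat \<Rightarrow> int \<Rightarrow> 'a::semiring_0) \<Rightarrow>
    (nat \<Rightarrow> int \<Rightarrow> 'a) \<Rightarrow> nat \<Rightarrow> int \<Rightarrow> 'a"
  where "window_comb b K D us cs = (\<lambda>i k. \<Sum>j<K. \<Sum>m\<in>{0..<int D}. cs j m * us j i (k - int b * m))"

lemma window_comb_eq_sum_smul_b:
  assumes "\<forall>j<K. {m. cs j m \<noteq> 0} \<subseteq> {0..<int D}"
  shows "window_comb b K D us cs = (\<Sum>j<K. smul_b b (cs j) (us j))"
proof (intro ext)
  fix i k
  have "smul_b b (cs j) (us j) i k = (\<Sum>m\<in>{0..<int D}. cs j m * us j i (k - int b * m))"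
    if "j < K" for j
    using assms that by (intro smul_b_eq_sum_over) auto
  thus "window_comb b K D us cs i k = (\<Sum>j<K. smul_b b (cs j) (us j)) i k"
    unfolding window_comb_def sum_fun_apply by simp
qed

lemma window_comb_diff:
  "window_comb b K D us (c1 - c2) = window_comb b K D us c1 - window_comb b K D us (c2 :: nat \<Rightarrow> int \<Rightarrow> 'a::ring)"
  unfolding window_comb_def by (simp add: fun_eq_iff left_diff_distrib sum_subtractf)

lemma inj_on_window_comb:
  fixes us :: "nat \<Rightarrow> nat \<Rightarrow> int \<Rightarrow> 'a::comm_ring_1"
  assumes "indep_b b us K"
  shows "inj_on (window_comb b K D us) (supported_funs ({..<K} \<times> {0..<int D}))"
proof (rule inj_onI)
  fix c1 c2 :: "nat \<Rightarrow> int \<Rightarrow> 'a"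
  assume c: "c1 \<in> supported_funs ({..<K} \<times> {0..<int D})" "c2 \<in> supported_funs ({..<K} \<times> {0..<int D})"
    and eq: "window_comb b K D us c1 = window_comb b K D us c2"
  have supp: "\<forall>j<K. {m. (c1 - c2) j m \<noteq> 0} \<subseteq> {0..<int D}"
  proof (intro allI impI subsetI)
    fix j m assume "m \<in> {m. (c1 - c2) j m \<noteq> 0}"
    hence "c1 j m \<noteq> 0 \<or> c2 j m \<noteq> 0" by auto
    thus "m \<in> {0..<int D}" using c unfolding supported_funs_def by auto
  qed
  have "(\<Sum>j<K. smul_b b ((c1 - c2) j) (us j)) = window_comb b K D us (c1 - c2)"
    by (rule window_comb_eq_sum_smul_b[OF supp, symmetric])
  also have "\<dots> = 0" using eq by (simp only: window_comb_diff diff_self)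
  finally have "(\<Sum>j<K. smul_b b ((c1 - c2) j) (us j)) = 0" .
  moreover have "\<forall>j<K. finite {m. (c1 - c2) j m \<noteq> 0}"
    using supp by (meson finite_atLeastLessThan_int finite_subset)
  ultimately have zero: "\<forall>j<K. (c1 - c2) j = 0"
    using assms unfolding indep_b_def by (elim allE[of _ "c1 - c2"]) simp
  show "c1 = c2"
  proof (intro ext)
    fix j m show "c1 j m = c2 j m"
    proof (cases "j < K")
      case True thus ?thesis using zero fun_cong[of "(c1 - c2) j" 0 m] by simp
    next
      case False
      hence "c1 j m = 0" "c2 j m = 0" using c unfolding supported_funs_def by blast+
      thus ?thesis by simp
    qed
  qed
qed

lemma window_comb_low_slot_vecs:
  assumes "\<forall>j<K. us j \<in> low_slot_vecs n b r"
    and "\<And>j i k. j < K \<Longrightarrow> us j i k \<noteq> 0 \<Longrightarrow> \<bar>k\<bar> \<le> int A"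
  shows "window_comb b K D us cs \<in>
    supported_funs {(i,k). slot b i k < r \<and> - int A \<le> k \<and> k \<le> int A + int b * int D}"
  unfolding supported_funs_def
proof (rule CollectI, intro allI impI)
  fix i k assume "window_comb b K D us cs i k \<noteq> 0"
  then obtain j where "j \<in> {..<K}" and "(\<Sum>m\<in>{0..<int D}. cs j m * us j i (k - int b * m)) \<noteq> 0"
    unfolding window_comb_def by (rule sum.not_neutral_contains_not_neutral)
  moreover from this(2) obtain m where "m \<in> {0..<int D}" and "cs j m * us j i (k - int b * m) \<noteq> 0"
    by (rule sum.not_neutral_contains_not_neutral)
  ultimately have j: "j < K" and m: "0 \<le> m" "m < int D" and nz: "us j i (k - int b * m) \<noteq> 0"
    by auto
  have "slot b i (k - int b * m) < r"
    using assms(1) j nz unfolding low_slot_vecs_def by (auto simp: not_le[symmetric])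
  hence "slot b i k < r" by (simp add: slot_diff_dvd)
  moreover have "0 \<le> int b * m" "int b * m \<le> int b * int D" using m by (auto intro: mult_left_mono)
  ultimately show "(i,k) \<in> {(i,k). slot b i k < r \<and> - int A \<le> k \<and> k \<le> int A + int b * int D}"
    using assms(2)[OF j nz] by auto
qed

text \<open>
  By independence the K-tuples of coefficients of twisted degree < D give |F|^(K D) distinct
  combinations, all supported on the r (2 A + D + 1) positions counted by slot_window; D is
  chosen to make the latter number smaller.
\<close>

lemma not_indep_b_low_slot_vecs:
  fixes us :: "nat \<Rightarrow> nat \<Rightarrow> int \<Rightarrow> 'a::comm_ring_1"
  assumes "finite (UNIV :: 'a set)" "0 < b" "\<forall>j<K. us j \<in> low_slot_vecs n b r" "r < K"
  shows "\<not> indep_b b us K"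
proof
  assume ind: "indep_b b us K"
  obtain A where A: "\<And>j i k. j < K \<Longrightarrow> us j i k \<noteq> 0 \<Longrightarrow> \<bar>k\<bar> \<le> int A"
    using laurent_vecs_exponent_bound assms(3) unfolding low_slot_vecs_def by blast
  define D where "D = r * (2 * A + 1) + 1"
  define T where "T = {(i,k). slot b i k < r \<and> - int A \<le> k \<and> k \<le> int A + int b * int D}"
  let ?q = "card (UNIV :: 'a set)"
  let ?coeffs = "supported_funs ({..<K} \<times> {0..<int D}) :: (nat \<Rightarrow> int \<Rightarrow> 'a) set"
  have q: "1 < ?q" using card_mono[OF assms(1), of "{0, 1}"] by simp
  have T: "finite T" "card T \<le> r * (2 * A + D + 1)"
    using slot_window[OF assms(2)] unfolding T_def by auto
  have "r * (2 * A + D + 1) < Suc r * D" unfolding D_def by (simp add: algebra_simps)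
  also have "\<dots> \<le> K * D" using assms(4) by (intro mult_right_mono) auto
  finally have window: "r * (2 * A + D + 1) < K * D" .
  have "card (supported_funs T :: (nat \<Rightarrow> int \<Rightarrow> 'a) set) \<le> ?q ^ (r * (2 * A + D + 1))"
    unfolding card_supported_funs(2)[OF T(1) assms(1)] using q by (intro power_increasing T(2)) auto
  also have "\<dots> < ?q ^ (K * D)" using q by (rule power_strict_increasing[OF window])
  also have "\<dots> = card ?coeffs" using card_supported_funs(2)[OF _ assms(1), of "{..<K} \<times> {0..<int D}"]
    by (simp add: card_cartesian_product)
  also have "card ?coeffs \<le> card (supported_funs T :: (nat \<Rightarrow> int \<Rightarrow> 'a) set)"
    using window_comb_low_slot_vecs[OF assms(3) A] unfolding T_def
    by (intro card_inj_on_le[OF inj_on_window_comb[OF ind]] card_supported_funs(1) T(1)[unfolded T_def] assms(1)) auto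
  finally show False by simp
qed

lemma rk_b_aug_kernel:
  assumes "finite (UNIV :: 'a set)" "0 < b" "r \<le> n * b"
  shows "rk_b b (aug_kernel n b r :: (nat \<Rightarrow> int \<Rightarrow> 'a::comm_ring_1) set) = r"
  unfolding rk_b_def
proof (rule Greatest_equality)
  show "\<exists>us. (\<forall>j<r. us j \<in> (aug_kernel n b r :: (nat \<Rightarrow> int \<Rightarrow> 'a) set)) \<and> indep_b b us r"
    using basis_vec_aug_kernel[OF assms(2) _ assms(3)] indep_b_basis_vec[OF assms(2)] by blast
next
  fix K assume "\<exists>us. (\<forall>j<K. us j \<in> (aug_kernel n b r :: (nat \<Rightarrow> int \<Rightarrow> 'a) set)) \<and> indep_b b us K"
  then obtain us where "\<forall>j<K. us j \<in> (low_slot_vecs n b r :: (nat \<Rightarrow> int \<Rightarrow> 'a) set)" "indep_b b us K"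
    unfolding aug_kernel_def by blast
  thus "K \<le> r" using not_indep_b_low_slot_vecs[OF assms(1,2)] by (meson not_le)
qed

lemma xpow_image_aug_kernel_ne:
  assumes "0 < b" "0 < r" "r \<le> n * b" "0 < e" "e < b"
  shows "xpow (int e) ` (aug_kernel n b r :: (nat \<Rightarrow> int \<Rightarrow> 'a::{zero_neq_one,ab_group_add}) set) \<noteq>
    aug_kernel n b r"
proof
  assume stable: "xpow (int e) ` (aug_kernel n b r :: (nat \<Rightarrow> int \<Rightarrow> 'a) set) = aug_kernel n b r"
  show False
  proof (cases "e < r")
    case True
    have "(unit_vec 0 (int e) :: nat \<Rightarrow> int \<Rightarrow> 'a) \<in> aug_kernel n b r"
      using basis_vec_aug_kernel[OF assms(1) True assms(3)] assms(4,5) by (simp add: basis_vec_def)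
    then obtain w where w: "w \<in> aug_kernel n b r"
      and shifted: "(unit_vec 0 (int e) :: nat \<Rightarrow> int \<Rightarrow> 'a) = xpow (int e) w"
      using stable by blast
    have "w = unit_vec 0 0"
    proof (intro ext)
      fix i k
      have "w i k = xpow (int e) w i (k + int e)" unfolding xpow_def by simp
      thus "w i k = unit_vec 0 0 i k" unfolding shifted[symmetric] by (simp add: unit_vec_def)
    qed
    hence "augmentation b w = (1::'a)" by (simp add: augmentation_unit_vec)
    with w show False unfolding aug_kernel_def by simp
  next
    case False
    have "xpow (int e) (basis_vec b 0 :: nat \<Rightarrow> int \<Rightarrow> 'a) \<in> aug_kernel n b r"
      using stable basis_vec_aug_kernel[OF assms(1-3)] by blast
    moreover have "slot b 0 (int e) = e" unfolding slot_def using assms(5) by (simp flip: of_nat_mod)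
    moreover have "xpow (int e) (basis_vec b 0 :: nat \<Rightarrow> int \<Rightarrow> 'a) 0 (int e) = 1"
      using assms(1) by (simp add: xpow_def basis_vec_def unit_vec_def)
    ultimately show False using False unfolding aug_kernel_def low_slot_vecs_def by force
  qed
qed

lemma e_inv_aug_kernel:
  assumes "0 < b" "0 < r" "r \<le> n * b"
  shows "e_inv (aug_kernel n b r :: (nat \<Rightarrow> int \<Rightarrow> 'a::{zero_neq_one,ab_group_add}) set) = enat b"
proof -
  let ?stable = "\<lambda>e. 0 < e \<and> xpow (int e) ` (aug_kernel n b r :: (nat \<Rightarrow> int \<Rightarrow> 'a) set) = aug_kernel n b r"
  have stable_b: "?stable b" using assms(1) xpow_image_aug_kernel by blast
  have least: "(LEAST e. ?stable e) = b"
  proof (rule Least_equality)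
    fix e assume "?stable e"
    thus "b \<le> e" using xpow_image_aug_kernel_ne[OF assms, of e] by (meson not_le)
  qed (rule stable_b)
  have "\<exists>e. ?stable e" using stable_b by (rule exI)
  thus ?thesis unfolding e_inv_def least by (simp only: if_True)
qed

theorem lemma6p19:
  fixes p n b r :: nat
  assumes "prime p" and "card (UNIV :: 'a set) = p"
    and "0 < n" and "0 < b" and "0 < r" and "r \<le> n * b"
  shows "\<exists>U :: (nat \<Rightarrow> int \<Rightarrow> 'a::field) set.
           add_subgroup n U \<and> e_inv U = enat b \<and> rk_b b U = r"
proof (intro exI conjI)
  have "finite (UNIV :: 'a set)"
    using assms(1,2) prime_gt_0_nat card_ge_0_finite by metis
  thus "rk_b b (aug_kernel n b r :: (nat \<Rightarrow> int \<Rightarrow> 'a) set) = r"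
    using assms(4,6) by (rule rk_b_aug_kernel)
  show "add_subgroup n (aug_kernel n b r :: (nat \<Rightarrow> int \<Rightarrow> 'a) set)"
    by (rule add_subgroup_aug_kernel)
  show "e_inv (aug_kernel n b r :: (nat \<Rightarrow> int \<Rightarrow> 'a) set) = enat b"
    using assms(4-6) by (rule e_inv_aug_kernel)
qed

end
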